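(* For every $0<\alpha\le 1$ there exist $n$, $m$, a preference profile $\sigma$ on $n$ voters and $m$ alternatives, and two distributions $\mathcal{D}_1,\mathcal{D}_2$ both supported on $[0,1]$ such that no alternative $j\in A$ satisfies both $\mathbb{E}_{\mathcal{D}_1}[\mathrm{sw}(j,u)]\ge\alpha\max_{k\in A}\mathbb{E}_{\mathcal{D}_1}[\mathrm{sw}(k,u)]$ and $\mathbb{E}_{\mathcal{D}_2}[\mathrm{sw}(j,u)]\ge\alpha\max_{k\in A}\mathbb{E}_{\mathcal{D}_2}[\mathrm{sw}(k,u)]$.
   Context: There are $n$ voters and $m$ alternatives $A=\{1,\dots,m\}$. A preference profile $\sigma$ consists of a ranking of $A$ for each voter. Given a distribution $\mathcal{D}$ and profile $\sigma$, a random utility profile $u$ consistent with $\sigma$ is generated as follows: independently for each voter $i$, draw $m$ i.i.d. samples from $\mathcal{D}$ and assign them, from highest to lowest, to the alternatives in the order of voter $i$'s ranking. The social welfare of $j$ is $\mathrm{sw}(j,u)=\sum_i u_{ij}$; $\mathbb{E}_{\mathcal{D}}$ denotes expectation over $u$ generated with distribution $\mathcal{D}$. *)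

theory Defs
  imports "HOL-Probability.Probability"
begin

(* A preference profile sigma gives, for each voter i, the rank position
   sigma i j of alternative j (0 = most preferred); it must be a bijection
   {..<m} -> {..<m} for every voter. *)
definition is_profile :: "nat \<Rightarrow> nat \<Rightarrow> (nat \<Rightarrow> nat \<Rightarrow> nat) \<Rightarrow> bool" where
  "is_profile n m \<sigma> \<longleftrightarrow> (\<forall>i<n. bij_betw (\<sigma> i) {..<m} {..<m})"

definition unit_supported :: "real measure \<Rightarrow> bool" where
  "unit_supported D \<longleftrightarrow> prob_space D \<and> sets D = sets borel \<and> measure D {0..1} = 1"

definition desc_nth :: "(nat \<Rightarrow> real) \<Rightarrow> nat \<Rightarrow> nat \<Rightarrow> real" where
  "desc_nth x m k = rev (sort (map x [0..<m])) ! k"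

(* Samples: s i k is the k-th of the m i.i.d. draws of voter i.
   The utility of voter i for alternative j: the samples sorted from highest to
   lowest are assigned in the order of voter i's ranking. *)
definition utility :: "nat \<Rightarrow> (nat \<Rightarrow> nat \<Rightarrow> nat) \<Rightarrow> (nat \<Rightarrow> nat \<Rightarrow> real) \<Rightarrow> nat \<Rightarrow> nat \<Rightarrow> real" where
  "utility m \<sigma> s i j = desc_nth (s i) m (\<sigma> i j)"

definition sample_space :: "nat \<Rightarrow> nat \<Rightarrow> real measure \<Rightarrow> (nat \<Rightarrow> nat \<Rightarrow> real) measure" where
  "sample_space n m D = PiM {..<n} (\<lambda>_. PiM {..<m} (\<lambda>_. D))"

definition sw :: "nat \<Rightarrow> nat \<Rightarrow> (nat \<Rightarrow> nat \<Rightarrow> nat) \<Rightarrow> (nat \<Rightarrow> nat \<Rightarrow> real) \<Rightarrow> nat \<Rightarrow> real" where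
  "sw n m \<sigma> s j = (\<Sum>i<n. utility m \<sigma> s i j)"

definition expected_sw :: "nat \<Rightarrow> nat \<Rightarrow> (nat \<Rightarrow> nat \<Rightarrow> nat) \<Rightarrow> real measure \<Rightarrow> nat \<Rightarrow> real" where
  "expected_sw n m \<sigma> D j = (\<integral>s. sw n m \<sigma> s j \<partial>sample_space n m D)"

end

theory Submission
  imports Defs
begin

(* Take r voters and r + L alternatives, where voter i < r ranks alternative i first, then the
   L dummy alternatives r, ..., r + L - 1, then the other alternatives below r.  Utilities are
   Bernoulli draws.  If a draw is 1 only with a tiny probability p, the top position is worth
   about p but every lower position only O(p^2); since no dummy is ever ranked first, every
   dummy is far from optimal.  If the draws are fair coins, the second position is worth at
   least 1/2, so dummy r has welfare at least r/2, whereas for large L positions beyond L are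
   almost surely worth 0, so each alternative below r has welfare below 2.  For r > 4/alpha
   no alternative is an alpha-approximation for both distributions.  The order statistics are
   estimated by Chernoff-type bounds: the number N of ones among m draws satisfies
   E c^N = (qc + 1 - q)^m. *)

section \<open>Order statistics\<close>

lemma length_filter_sort_map:
  "length (filter P (sort (map x [0..<m]))) = card {i. i < m \<and> P (x i)}"
proof -
  have "length (filter P (sort (map x [0..<m]))) = length (filter P (map x [0..<m]))"
    by (metis mset_filter mset_sort size_mset)
  also have "\<dots> = card {i. i < m \<and> P (map x [0..<m] ! i)}"
    by (simp add: length_filter_conv_card del: map_nth)
  also have "{i. i < m \<and> P (map x [0..<m] ! i)} = {i. i < m \<and> P (x i)}"
    by auto
  finally show ?thesis .
qed

lemma desc_nth_ge_iff:
  fixes x :: "nat \<Rightarrow> real"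
  assumes "k < m"
  shows "t \<le> desc_nth x m k \<longleftrightarrow> k < card {i. i < m \<and> t \<le> x i}"
proof -
  define zs where "zs = sort (map x [0..<m])"
  define j where "j = m - 1 - k"
  have len: "length zs = m" and sorted: "sorted zs" and "j < m"
    using assms by (simp_all add: zs_def j_def)
  have desc: "desc_nth x m k = zs ! j"
    using assms len unfolding desc_nth_def zs_def[symmetric] j_def by (simp add: rev_nth)
  have count: "card {i. i < m \<and> t \<le> x i} = card {i. i < m \<and> t \<le> zs ! i}"
    using length_filter_sort_map[of "\<lambda>y. t \<le> y" x m] len
    by (simp add: zs_def length_filter_conv_card)
  \<comment> \<open>the entries of the sorted list zs that are at least t form a final segment\<close>
  let ?C = "{i. i < m \<and> t \<le> zs ! i}"
  have fin: "finite ?C" by simp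
  show ?thesis
  proof (cases "t \<le> zs ! j")
    case True
    have "{j..<m} \<subseteq> ?C"
    proof
      fix i assume "i \<in> {j..<m}"
      then show "i \<in> ?C" using True sorted_nth_mono[OF sorted, of j i] len by auto
    qed
    then have "card {j..<m} \<le> card ?C" using fin by (rule card_mono[rotated])
    then show ?thesis unfolding desc count using True assms by (simp add: j_def)
  next
    case False
    have "?C \<subseteq> {Suc j..<m}"
    proof
      fix i assume "i \<in> ?C"
      with False have "\<not> i \<le> j"
        using sorted_nth_mono[OF sorted, of i j] len \<open>j < m\<close> by force
      with \<open>i \<in> ?C\<close> show "i \<in> {Suc j..<m}" by simp
    qed
    then have "card ?C \<le> card {Suc j..<m}" by (intro card_mono) simp_all
    then show ?thesis unfolding desc count using False assms by (simp add: j_def)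
  qed
qed

lemma desc_nth_in:
  assumes "\<And>i. i < m \<Longrightarrow> x i \<in> A" and "k < m"
  shows "desc_nth x m k \<in> A"
proof -
  have "desc_nth x m k \<in> set (rev (sort (map x [0..<m])))"
    unfolding desc_nth_def using assms(2) by (intro nth_mem) simp
  then show ?thesis using assms(1) by auto
qed

lemma borel_measurable_desc_nth:
  assumes "k < m" and coord: "\<And>i. i < m \<Longrightarrow> (\<lambda>x. x i) \<in> borel_measurable M"
  shows "(\<lambda>x. desc_nth x m k) \<in> borel_measurable M"
proof (subst borel_measurable_iff_ge, intro allI)
  fix t
  have count: "(\<lambda>x. \<Sum>i<m. of_bool (t \<le> x i) :: real) \<in> borel_measurable M"
    using coord by measurable
  have "{x \<in> space M. t \<le> desc_nth x m k}
      = {x \<in> space M. real k < (\<Sum>i<m. of_bool (t \<le> x i))}"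
    using assms(1) by (simp add: desc_nth_ge_iff sum_of_bool_eq Int_def conj_commute)
  also have "\<dots> \<in> sets M"
    using count unfolding borel_measurable_iff_greater by blast
  finally show "{x \<in> space M. t \<le> desc_nth x m k} \<in> sets M" .
qed

lemma desc_nth_binary:
  fixes x :: "nat \<Rightarrow> real"
  assumes "\<forall>i<m. x i \<in> {0, 1}" and "k < m"
  shows "desc_nth x m k = of_bool (k < card {i. i < m \<and> x i = 1})"
proof -
  have "{i. i < m \<and> 1 \<le> x i} = {i. i < m \<and> x i = 1}"
    using assms(1) by auto
  then have "1 \<le> desc_nth x m k \<longleftrightarrow> k < card {i. i < m \<and> x i = 1}"
    using desc_nth_ge_iff[OF assms(2), of 1 x] by simp
  moreover have "desc_nth x m k \<in> {0, 1}"
    using assms by (intro desc_nth_in) auto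
  ultimately show ?thesis by auto
qed

section \<open>Expected order statistics of independent samples\<close>

lemma AE_PiM_all_components:
  assumes "prob_space D" and "finite I" and "AE x in D. P x"
  shows "AE x in PiM I (\<lambda>_. D). \<forall>i\<in>I. P (x i)"
  using assms by (subst AE_ball_countable) (auto intro: AE_PiM_component countable_finite)

lemma unit_supported_AE:
  assumes "unit_supported D"
  shows "AE x in D. x \<in> {0..1}"
  using assms prob_space.AE_prob_1 unfolding unit_supported_def by blast

lemma measurable_component_unit_supported:
  assumes "unit_supported D" and "i \<in> I"
  shows "(\<lambda>x. x i) \<in> borel_measurable (PiM I (\<lambda>_. D))"
proof -
  have sets: "sets D = sets borel" using assms(1) unfolding unit_supported_def by simp
  have "(\<lambda>x. x i) \<in> PiM I (\<lambda>_. D) \<rightarrow>\<^sub>M D" using assms(2) by simp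
  then show ?thesis by (simp add: measurable_cong_sets[OF refl sets])
qed

lemma AE_desc_nth_unit_interval:
  assumes D: "unit_supported D" and "k < m"
  shows "AE x in PiM {..<m} (\<lambda>_. D). desc_nth x m k \<in> {0..1}"
proof -
  have "prob_space D" using D unfolding unit_supported_def by simp
  from AE_PiM_all_components[OF \<open>prob_space D\<close> finite_lessThan unit_supported_AE[OF D]]
  show ?thesis by (rule eventually_mono) (rule desc_nth_in, use \<open>k < m\<close> in auto)
qed

lemma integrable_desc_nth:
  assumes D: "unit_supported D" and "k < m"
  shows "integrable (PiM {..<m} (\<lambda>_. D)) (\<lambda>x. desc_nth x m k)"
proof -
  have "prob_space D" using D unfolding unit_supported_def by simp
  then interpret prob_space "PiM {..<m} (\<lambda>_. D)" by (intro prob_space_PiM)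
  show ?thesis
  proof (rule integrable_const_bound)
    show "AE x in PiM {..<m} (\<lambda>_. D). norm (desc_nth x m k) \<le> 1"
      using AE_desc_nth_unit_interval[OF assms] by (rule eventually_mono) auto
    show "(\<lambda>x. desc_nth x m k) \<in> borel_measurable (PiM {..<m} (\<lambda>_. D))"
      using assms by (intro borel_measurable_desc_nth measurable_component_unit_supported) auto
  qed
qed

definition expected_order_stat :: "real measure \<Rightarrow> nat \<Rightarrow> nat \<Rightarrow> real" where
  "expected_order_stat D m k = (\<integral>x. desc_nth x m k \<partial>PiM {..<m} (\<lambda>_. D))"

lemma expected_order_stat_nonneg:
  assumes "unit_supported D" and "k < m"
  shows "0 \<le> expected_order_stat D m k"
  unfolding expected_order_stat_def
  using AE_desc_nth_unit_interval[OF assms] by (intro integral_nonneg_AE) (rule eventually_mono, auto)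

lemma expected_order_stat_le_1:
  assumes D: "unit_supported D" and "k < m"
  shows "expected_order_stat D m k \<le> 1"
proof -
  have "prob_space D" using D unfolding unit_supported_def by simp
  then interpret prob_space "PiM {..<m} (\<lambda>_. D)" by (intro prob_space_PiM)
  show ?thesis
    unfolding expected_order_stat_def using AE_desc_nth_unit_interval[OF assms]
    by (intro integral_le_const integrable_desc_nth assms) (rule eventually_mono, auto)
qed

lemma integrable_component_desc_nth:
  assumes D: "unit_supported D" and "i \<in> I" "k < m"
  shows "integrable (PiM I (\<lambda>_. PiM {..<m} (\<lambda>_. D))) (\<lambda>s. desc_nth (s i) m k)"
proof -
  let ?S = "PiM {..<m} (\<lambda>_. D)"
  have "prob_space ?S" using D unfolding unit_supported_def by (intro prob_space_PiM) simp
  then have "distr (PiM I (\<lambda>_. ?S)) ?S (\<lambda>s. s i) = ?S"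
    using \<open>i \<in> I\<close> by (intro distr_PiM_component) auto
  then have "integrable (distr (PiM I (\<lambda>_. ?S)) ?S (\<lambda>s. s i)) (\<lambda>x. desc_nth x m k)"
    using integrable_desc_nth[OF D \<open>k < m\<close>] by simp
  then show ?thesis
    using assms
    by (subst (asm) integrable_distr_eq)
      (auto intro: borel_measurable_desc_nth measurable_component_unit_supported)
qed

lemma integral_component_desc_nth:
  assumes D: "unit_supported D" and "i \<in> I" "k < m"
  shows "(\<integral>s. desc_nth (s i) m k \<partial>PiM I (\<lambda>_. PiM {..<m} (\<lambda>_. D))) = expected_order_stat D m k"
proof -
  let ?S = "PiM {..<m} (\<lambda>_. D)"
  have "prob_space ?S" using D unfolding unit_supported_def by (intro prob_space_PiM) simp
  then have "distr (PiM I (\<lambda>_. ?S)) ?S (\<lambda>s. s i) = ?S"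
    using \<open>i \<in> I\<close> by (intro distr_PiM_component) auto
  moreover have "(\<integral>x. desc_nth x m k \<partial>distr (PiM I (\<lambda>_. ?S)) ?S (\<lambda>s. s i))
      = (\<integral>s. desc_nth (s i) m k \<partial>PiM I (\<lambda>_. ?S))"
    using assms
    by (intro integral_distr) (auto intro: borel_measurable_desc_nth measurable_component_unit_supported)
  ultimately show ?thesis unfolding expected_order_stat_def by simp
qed

lemma expected_sw_eq_sum_order_stat:
  assumes D: "unit_supported D" and rank: "\<forall>i<n. \<sigma> i j < m"
  shows "expected_sw n m \<sigma> D j = (\<Sum>i<n. expected_order_stat D m (\<sigma> i j))"
proof -
  let ?M = "PiM {..<n} (\<lambda>_. PiM {..<m} (\<lambda>_. D))"
  have "expected_sw n m \<sigma> D j = (\<integral>s. (\<Sum>i<n. desc_nth (s i) m (\<sigma> i j)) \<partial>?M)"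
    unfolding expected_sw_def sw_def utility_def sample_space_def ..
  also have "\<dots> = (\<Sum>i<n. \<integral>s. desc_nth (s i) m (\<sigma> i j) \<partial>?M)"
    using rank by (intro Bochner_Integration.integral_sum integrable_component_desc_nth D) auto
  also have "\<dots> = (\<Sum>i<n. expected_order_stat D m (\<sigma> i j))"
    using rank by (intro sum.cong integral_component_desc_nth D) auto
  finally show ?thesis .
qed

section \<open>Bernoulli utilities\<close>

definition bernoulli_real :: "real \<Rightarrow> real measure" where
  "bernoulli_real q = distr (measure_pmf (bernoulli_pmf q)) borel of_bool"

lemma sets_bernoulli_real [simp, measurable_cong]: "sets (bernoulli_real q) = sets borel"
  unfolding bernoulli_real_def by simp

lemma prob_space_bernoulli_real: "prob_space (bernoulli_real q)"
  unfolding bernoulli_real_def by (intro prob_space.prob_space_distr) (auto simp: prob_space_measure_pmf)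

lemma unit_supported_bernoulli_real: "unit_supported (bernoulli_real q)"
proof -
  have "of_bool -` {0..1::real} = UNIV" by auto
  then have "measure (bernoulli_real q) {0..1} = 1"
    unfolding bernoulli_real_def by (subst measure_distr) auto
  then show ?thesis
    unfolding unit_supported_def using prob_space_bernoulli_real by simp
qed

lemma AE_bernoulli_real: "AE x in bernoulli_real q. x \<in> {0, 1}"
  unfolding bernoulli_real_def by (subst AE_distr_iff) auto

lemma integral_bernoulli_real:
  assumes "0 \<le> q" "q \<le> 1" and "g \<in> borel_measurable borel"
  shows "(\<integral>x. g x \<partial>bernoulli_real q) = q * g 1 + (1 - q) * g 0"
  unfolding bernoulli_real_def using assms by (subst integral_distr) auto

lemma AE_bernoulli_real_PiM:
  fixes m :: nat
  shows "AE x in PiM {..<m} (\<lambda>_. bernoulli_real q). \<forall>i<m. x i \<in> {0, 1}"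
  using AE_PiM_all_components[OF prob_space_bernoulli_real finite_lessThan[of m] AE_bernoulli_real[of q]]
  by (simp add: Ball_def)

lemma integrable_bernoulli_real_if:
  fixes c :: real
  shows "integrable (bernoulli_real q) (\<lambda>v. if v = 1 then c else 1)"
proof -
  interpret prob_space "bernoulli_real q" by (rule prob_space_bernoulli_real)
  show ?thesis by (rule integrable_const_bound[where B="\<bar>c\<bar> + 1"]) auto
qed

lemma integrable_bernoulli_real_prod:
  fixes m :: nat and c :: real
  shows "integrable (PiM {..<m} (\<lambda>_. bernoulli_real q)) (\<lambda>x. \<Prod>i<m. if x i = 1 then c else 1)"
proof -
  interpret product_prob_space "\<lambda>_::nat. bernoulli_real q"
    by (intro product_prob_spaceI prob_space_bernoulli_real)
  show ?thesis
    by (intro product_integrable_prod integrable_bernoulli_real_if) auto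
qed

lemma integral_bernoulli_real_prod:
  fixes m :: nat and c :: real
  assumes "0 \<le> q" "q \<le> 1"
  shows "(\<integral>x. (\<Prod>i<m. if x i = 1 then c else 1) \<partial>PiM {..<m} (\<lambda>_. bernoulli_real q))
       = (q * c + (1 - q)) ^ m"
proof -
  interpret product_prob_space "\<lambda>_::nat. bernoulli_real q"
    by (intro product_prob_spaceI prob_space_bernoulli_real)
  show ?thesis
    using assms
    by (subst product_integral_prod) (auto simp: integral_bernoulli_real integrable_bernoulli_real_if)
qed

lemma prod_if_eq_power_card:
  fixes c :: "'a :: comm_monoid_mult" and m :: nat
  shows "(\<Prod>i<m. if P i then c else 1) = c ^ card {i. i < m \<and> P i}"
proof -
  have "(\<Prod>i<m. if P i then c else 1)
      = (\<Prod>i\<in>{..<m} \<inter> {i. P i}. c) * (\<Prod>i\<in>{..<m} \<inter> - {i. P i}. 1)"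
    by (rule prod.If_cases) simp
  also have "{..<m} \<inter> {i. P i} = {i. i < m \<and> P i}" by auto
  finally show ?thesis by simp
qed

lemma of_bool_less_le_power_divide:
  fixes c :: real
  assumes "1 \<le> c"
  shows "of_bool (k < N) \<le> c ^ N / c ^ (k + 1)"
proof (cases "k < N")
  case True
  then have "c ^ (k + 1) \<le> c ^ N" using assms by (intro power_increasing) auto
  then show ?thesis using True assms by simp
qed (use assms in simp)

lemma one_minus_power_le_of_bool:
  fixes c :: real
  assumes "1 \<le> c"
  shows "1 - c ^ k * (1 / c) ^ N \<le> of_bool (k < N)"
proof (cases "k < N")
  case False
  then have "c ^ N \<le> c ^ k" using assms by (intro power_increasing) auto
  then show ?thesis using False assms by (simp add: power_one_over)
qed (use assms in simp)

lemma desc_nth_binary_le_prod: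
  fixes x :: "nat \<Rightarrow> real" and c :: real
  assumes "\<forall>i<m. x i \<in> {0, 1}" and "1 \<le> c" "k < m"
  shows "desc_nth x m k \<le> (\<Prod>i<m. if x i = 1 then c else 1) / c ^ (k + 1)"
  using of_bool_less_le_power_divide[OF assms(2), of k "card {i. i < m \<and> x i = 1}"]
    desc_nth_binary[OF assms(1,3)] prod_if_eq_power_card[of "\<lambda>i. x i = 1" c m]
  by simp

lemma desc_nth_binary_ge_prod:
  fixes x :: "nat \<Rightarrow> real" and c :: real
  assumes "\<forall>i<m. x i \<in> {0, 1}" and "1 \<le> c" "k < m"
  shows "1 - c ^ k * (\<Prod>i<m. if x i = 1 then 1 / c else 1) \<le> desc_nth x m k"
  using one_minus_power_le_of_bool[OF assms(2), of k "card {i. i < m \<and> x i = 1}"]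
    desc_nth_binary[OF assms(1,3)] prod_if_eq_power_card[of "\<lambda>i. x i = 1" "1 / c" m]
  by simp

lemma expected_order_stat_bernoulli_le:
  assumes "0 \<le> q" "q \<le> 1" "1 \<le> c" "k < m"
  shows "expected_order_stat (bernoulli_real q) m k \<le> (q * c + (1 - q)) ^ m / c ^ (k + 1)"
proof -
  let ?M = "PiM {..<m} (\<lambda>_. bernoulli_real q)"
  let ?Z = "\<lambda>x. \<Prod>i<m. if x i = 1 then c else 1"
  have "AE x in ?M. desc_nth x m k \<le> ?Z x / c ^ (k + 1)"
    using AE_bernoulli_real_PiM[of m q]
    by (rule eventually_mono) (rule desc_nth_binary_le_prod[OF _ assms(3,4)])
  then have "expected_order_stat (bernoulli_real q) m k \<le> (\<integral>x. ?Z x / c ^ (k + 1) \<partial>?M)"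
    unfolding expected_order_stat_def
    by (intro integral_mono_AE integrable_desc_nth unit_supported_bernoulli_real
        integrable_divide_zero integrable_bernoulli_real_prod assms)
  also have "\<dots> = (q * c + (1 - q)) ^ m / c ^ (k + 1)"
    using integral_bernoulli_real_prod[OF assms(1,2)] by simp
  finally show ?thesis .
qed

lemma expected_order_stat_bernoulli_ge:
  assumes "0 \<le> q" "q \<le> 1" "1 \<le> c" "k < m"
  shows "1 - c ^ k * (q / c + (1 - q)) ^ m \<le> expected_order_stat (bernoulli_real q) m k"
proof -
  let ?M = "PiM {..<m} (\<lambda>_. bernoulli_real q)"
  let ?W = "\<lambda>x. \<Prod>i<m. if x i = 1 then 1 / c else 1"
  interpret prob_space ?M by (intro prob_space_PiM prob_space_bernoulli_real)
  have "AE x in ?M. 1 - c ^ k * ?W x \<le> desc_nth x m k"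
    using AE_bernoulli_real_PiM[of m q]
    by (rule eventually_mono) (rule desc_nth_binary_ge_prod[OF _ assms(3,4)])
  then have "(\<integral>x. 1 - c ^ k * ?W x \<partial>?M) \<le> expected_order_stat (bernoulli_real q) m k"
    unfolding expected_order_stat_def
    by (intro integral_mono_AE integrable_desc_nth unit_supported_bernoulli_real
        Bochner_Integration.integrable_diff integrable_mult_right integrable_bernoulli_real_prod assms)
      auto
  moreover have "(\<integral>x. 1 - c ^ k * ?W x \<partial>?M) = 1 - c ^ k * (q / c + (1 - q)) ^ m"
    using integrable_bernoulli_real_prod[of m q "1 / c"]
      integral_bernoulli_real_prod[OF assms(1,2), of m "1 / c"]
    by (simp add: prob_space)
  ultimately show ?thesis by simp
qed

lemma expected_order_stat_rare_top_ge:
  assumes "0 < q" "q \<le> 1" "0 < m"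
  shows "q / 2 \<le> expected_order_stat (bernoulli_real q) m 0"
proof -
  have "(1 - q / 2) ^ m \<le> (1 - q / 2) ^ 1"
    using assms by (intro power_decreasing) auto
  moreover have "1 - 2 ^ 0 * (q / 2 + (1 - q)) ^ m \<le> expected_order_stat (bernoulli_real q) m 0"
    using assms by (intro expected_order_stat_bernoulli_ge) auto
  ultimately show ?thesis by simp
qed

lemma expected_order_stat_rare_below_top_le:
  assumes "0 < q" "q \<le> 1" "1 \<le> k" "k < m"
  shows "expected_order_stat (bernoulli_real q) m k \<le> 2 ^ m * q\<^sup>2"
proof -
  have "expected_order_stat (bernoulli_real q) m k \<le> (q * (1 / q) + (1 - q)) ^ m / (1 / q) ^ (k + 1)"
    using assms by (intro expected_order_stat_bernoulli_le) auto
  also have "\<dots> = (2 - q) ^ m * q ^ (k + 1)"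
    using assms by (simp add: power_one_over)
  also have "\<dots> \<le> 2 ^ m * q\<^sup>2"
    using assms by (intro mult_mono power_mono power_decreasing) auto
  finally show ?thesis .
qed

lemma expected_order_stat_fair_le:
  assumes "k < m"
  shows "expected_order_stat (bernoulli_real (1 / 2)) m k \<le> 2 ^ m / 3 ^ (k + 1)"
  using expected_order_stat_bernoulli_le[of "1 / 2" 3 k m] assms by simp

lemma expected_order_stat_fair_beyond_le:
  assumes "L < k" "k < m"
  shows "expected_order_stat (bernoulli_real (1 / 2)) m k \<le> 2 ^ m / 3 ^ (L + 2)"
proof -
  have "expected_order_stat (bernoulli_real (1 / 2)) m k \<le> 2 ^ m / 3 ^ (k + 1)"
    using assms(2) by (rule expected_order_stat_fair_le)
  also have "\<dots> \<le> 2 ^ m / 3 ^ (L + 2)"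
    using assms(1) by (intro divide_left_mono power_increasing) auto
  finally show ?thesis .
qed

lemma expected_order_stat_fair_second_ge:
  assumes "5 \<le> m"
  shows "1 / 2 \<le> expected_order_stat (bernoulli_real (1 / 2)) m 1"
proof -
  have "((3::real) / 4) ^ m \<le> (3 / 4) ^ 5"
    using assms by (intro power_decreasing) auto
  moreover have "1 - 2 ^ 1 * ((1 / 2) / 2 + (1 - 1 / 2)) ^ m
      \<le> expected_order_stat (bernoulli_real (1 / 2)) m 1"
    using assms by (intro expected_order_stat_bernoulli_ge) auto
  ultimately show ?thesis by (simp add: power_divide)
qed

section \<open>The profile with dummy alternatives\<close>

definition dummy_profile :: "nat \<Rightarrow> nat \<Rightarrow> nat \<Rightarrow> nat \<Rightarrow> nat" where
  "dummy_profile r L i j =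
     (if j < r then (if j = i then 0 else if j < i then L + 1 + j else L + j) else j - r + 1)"

lemma dummy_profile_less: "i < r \<Longrightarrow> j < r + L \<Longrightarrow> dummy_profile r L i j < r + L"
  unfolding dummy_profile_def by auto

lemma is_profile_dummy_profile: "is_profile r (r + L) (dummy_profile r L)"
  unfolding is_profile_def
proof (intro allI impI)
  fix i assume "i < r"
  then have "dummy_profile r L i ` {..<r + L} \<subseteq> {..<r + L}"
    using dummy_profile_less by auto
  moreover have "inj_on (dummy_profile r L i) {..<r + L}"
    unfolding inj_on_def dummy_profile_def by (auto split: if_splits)
  ultimately show "bij_betw (dummy_profile r L i) {..<r + L} {..<r + L}"
    by (simp add: bij_betw_def endo_inj_surj)
qed

lemma expected_sw_dummy_profile:
  assumes "unit_supported D" and "j < r + L"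
  shows "expected_sw r (r + L) (dummy_profile r L) D j
       = (\<Sum>i<r. expected_order_stat D (r + L) (dummy_profile r L i j))"
  using assms dummy_profile_less by (intro expected_sw_eq_sum_order_stat) auto

lemma expected_sw_dummy_profile_dummy:
  assumes "unit_supported D" and "r \<le> j" "j < r + L"
  shows "expected_sw r (r + L) (dummy_profile r L) D j = r * expected_order_stat D (r + L) (j - r + 1)"
  using assms by (simp add: expected_sw_dummy_profile dummy_profile_def)

lemma expected_sw_dummy_profile_ge_top:
  assumes "unit_supported D" and "j < r"
  shows "expected_order_stat D (r + L) 0 \<le> expected_sw r (r + L) (dummy_profile r L) D j"
proof -
  have "expected_order_stat D (r + L) (dummy_profile r L j j)
      \<le> (\<Sum>i<r. expected_order_stat D (r + L) (dummy_profile r L i j))"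
    using assms dummy_profile_less
    by (intro member_le_sum expected_order_stat_nonneg) auto
  moreover have "dummy_profile r L j j = 0" using assms(2) by (simp add: dummy_profile_def)
  ultimately show ?thesis
    using assms by (simp add: expected_sw_dummy_profile)
qed

definition approx_optimal ::
    "real \<Rightarrow> nat \<Rightarrow> nat \<Rightarrow> (nat \<Rightarrow> nat \<Rightarrow> nat) \<Rightarrow> real measure \<Rightarrow> nat \<Rightarrow> bool" where
  "approx_optimal \<alpha> n m \<sigma> D j \<longleftrightarrow>
     \<alpha> * Max ((\<lambda>k. expected_sw n m \<sigma> D k) ` {..<m}) \<le> expected_sw n m \<sigma> D j"

lemma dummy_not_approx_optimal_rare:
  fixes \<alpha> p :: real
  assumes "0 < \<alpha>" "\<alpha> \<le> 1" "0 < r" and p: "p = \<alpha> / (real r * 2 ^ (r + L + 2))"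
    and "r \<le> j" "j < r + L"
  shows "\<not> approx_optimal \<alpha> r (r + L) (dummy_profile r L) (bernoulli_real p) j"
proof -
  let ?E = "expected_sw r (r + L) (dummy_profile r L) (bernoulli_real p)"
  let ?e = "expected_order_stat (bernoulli_real p) (r + L)"
  have "(1::real) * 1 \<le> real r * 2 ^ (r + L + 2)"
    using \<open>0 < r\<close> by (intro mult_mono one_le_power) auto
  then have "0 < p" "p \<le> 1"
    using p \<open>0 < \<alpha>\<close> \<open>\<alpha> \<le> 1\<close> by (simp_all add: divide_le_eq)
  have scale: "real r * 2 ^ (r + L) * p = \<alpha> / 4"
    using p \<open>0 < r\<close> by (simp add: field_simps)
  have "?E j = r * ?e (j - r + 1)"
    using assms by (intro expected_sw_dummy_profile_dummy unit_supported_bernoulli_real)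
  also have "\<dots> \<le> r * (2 ^ (r + L) * p\<^sup>2)"
    using assms \<open>0 < p\<close> \<open>p \<le> 1\<close> by (intro mult_left_mono expected_order_stat_rare_below_top_le) auto
  also have "\<dots> = \<alpha> * p / 4"
    using scale by (simp add: power2_eq_square algebra_simps)
  also have "\<dots> < \<alpha> * (p / 2)"
    using \<open>0 < \<alpha>\<close> \<open>0 < p\<close> by simp
  also have "\<dots> \<le> \<alpha> * ?e 0"
    using \<open>0 < \<alpha>\<close> \<open>0 < p\<close> \<open>p \<le> 1\<close> \<open>0 < r\<close> expected_order_stat_rare_top_ge[of p "r + L"]
    by simp
  also have "\<dots> \<le> \<alpha> * ?E 0"
    using \<open>0 < \<alpha>\<close> \<open>0 < r\<close>
    by (intro mult_left_mono expected_sw_dummy_profile_ge_top unit_supported_bernoulli_real) auto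
  also have "\<dots> \<le> \<alpha> * Max (?E ` {..<r + L})"
    using \<open>0 < \<alpha>\<close> \<open>0 < r\<close> by (intro mult_left_mono Max_ge) auto
  finally show ?thesis unfolding approx_optimal_def by simp
qed

lemma expected_sw_dummy_profile_nondummy_le:
  assumes D: "unit_supported D" and "j < r" and "0 \<le> B"
    and beyond: "\<And>k. L < k \<Longrightarrow> k < r + L \<Longrightarrow> expected_order_stat D (r + L) k \<le> B"
  shows "expected_sw r (r + L) (dummy_profile r L) D j \<le> 1 + r * B"
proof -
  have "expected_sw r (r + L) (dummy_profile r L) D j
      = (\<Sum>i<r. expected_order_stat D (r + L) (dummy_profile r L i j))"
    using assms by (intro expected_sw_dummy_profile) auto
  also have "\<dots> \<le> (\<Sum>i<r. of_bool (i = j) + B)"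
  proof (intro sum_mono)
    fix i assume "i \<in> {..<r}"
    then show "expected_order_stat D (r + L) (dummy_profile r L i j) \<le> of_bool (i = j) + B"
      using assms beyond[of "dummy_profile r L i j"] dummy_profile_less[of i r j L]
        expected_order_stat_le_1[OF D, of 0 "r + L"]
      by (auto simp: dummy_profile_def)
  qed
  also have "\<dots> = 1 + r * B"
    using \<open>j < r\<close> by (simp add: sum.distrib)
  finally show ?thesis .
qed

lemma nondummy_not_approx_optimal_fair:
  fixes \<alpha> :: real
  assumes "4 < \<alpha> * r" "5 \<le> r" "real r * 2 ^ r * (2 / 3) ^ L < 1" and "j < r"
  shows "\<not> approx_optimal \<alpha> r (r + L) (dummy_profile r L) (bernoulli_real (1 / 2)) j"
proof -
  let ?E = "expected_sw r (r + L) (dummy_profile r L) (bernoulli_real (1 / 2))"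
  let ?e = "expected_order_stat (bernoulli_real (1 / 2)) (r + L)"
  have "0 < \<alpha>"
    using assms(1) mult_nonpos_nonneg[of \<alpha> "real r"] by force
  have "(1::real) * 1 \<le> real r * 2 ^ r"
    using assms(2) by (intro mult_mono one_le_power) auto
  then have "0 < L" using assms(3) by (cases L) auto
  have "?E j \<le> 1 + r * (2 ^ (r + L) / 3 ^ (L + 2))"
    using \<open>j < r\<close>
    by (intro expected_sw_dummy_profile_nondummy_le unit_supported_bernoulli_real
        expected_order_stat_fair_beyond_le) auto
  also have "r * (2 ^ (r + L) / 3 ^ (L + 2)) = real r * 2 ^ r * (2 / 3) ^ L / 9"
    by (simp add: power_add power_divide field_simps)
  also have "1 + real r * 2 ^ r * (2 / 3) ^ L / 9 < \<alpha> * (r / 2)"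
    using assms(1,3) by simp
  also have "\<dots> \<le> \<alpha> * (r * ?e 1)"
    using \<open>0 < \<alpha>\<close> assms(2) expected_order_stat_fair_second_ge[of "r + L"]
    by (intro mult_left_mono) auto
  also have "\<dots> = \<alpha> * ?E r"
    using \<open>0 < L\<close> by (simp add: expected_sw_dummy_profile_dummy[OF unit_supported_bernoulli_real])
  also have "\<dots> \<le> \<alpha> * Max (?E ` {..<r + L})"
    using \<open>0 < \<alpha>\<close> \<open>0 < L\<close> by (intro mult_left_mono Max_ge) auto
  finally show ?thesis unfolding approx_optimal_def by simp
qed

theorem theorem4:
  fixes \<alpha> :: real
  assumes "0 < \<alpha>" and "\<alpha> \<le> 1"
  shows "\<exists>n m \<sigma> D1 D2. n \<ge> 1 \<and> m \<ge> 1 \<and> is_profile n m \<sigma> \<and>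
           unit_supported D1 \<and> unit_supported D2 \<and>
           \<not> (\<exists>j<m. expected_sw n m \<sigma> D1 j \<ge> \<alpha> * Max ((\<lambda>k. expected_sw n m \<sigma> D1 k) ` {..<m})
                  \<and> expected_sw n m \<sigma> D2 j \<ge> \<alpha> * Max ((\<lambda>k. expected_sw n m \<sigma> D2 k) ` {..<m}))"
proof -
  obtain N :: nat where "4 / \<alpha> < N"
    using reals_Archimedean2 by blast
  define r where "r = N + 5"
  have "5 \<le> r" and "4 < \<alpha> * r"
    using \<open>4 / \<alpha> < N\<close> assms(1) by (simp_all add: r_def divide_less_eq algebra_simps)
  obtain L :: nat where "(2 / 3) ^ L < 1 / (real r * 2 ^ r)"
    using real_arch_pow_inv[of "1 / (real r * 2 ^ r)" "2 / 3 :: real"] \<open>5 \<le> r\<close> by auto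
  then have "real r * 2 ^ r * (2 / 3) ^ L < 1"
    using \<open>5 \<le> r\<close> by (simp add: field_simps)
  define p where "p = \<alpha> / (real r * 2 ^ (r + L + 2))"
  let ?A = "approx_optimal \<alpha> r (r + L) (dummy_profile r L)"
  have no_common: "\<not> (?A (bernoulli_real p) j \<and> ?A (bernoulli_real (1 / 2)) j)"
    if "j < r + L" for j
    using dummy_not_approx_optimal_rare[OF assms _ p_def _ that]
      nondummy_not_approx_optimal_fair[OF \<open>4 < \<alpha> * r\<close> \<open>5 \<le> r\<close>
        \<open>real r * 2 ^ r * (2 / 3) ^ L < 1\<close>]
      \<open>5 \<le> r\<close> by (cases "j < r") auto
  show ?thesis
    unfolding approx_optimal_def[symmetric]
  proof (intro exI conjI)
    show "\<not> (\<exists>j<r + L. ?A (bernoulli_real p) j \<and> ?A (bernoulli_real (1 / 2)) j)"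
      using no_common by blast
  qed (use \<open>5 \<le> r\<close> in \<open>auto intro: is_profile_dummy_profile unit_supported_bernoulli_real\<close>)
qed

end
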